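(* Let $z$ lie in a sufficiently small neighborhood of $\tfrac12$ and consider the germ in $Q$ $$H(Q)=\frac{1}{(w_1-w_0)(w_1-w_2)}(Q).$$ Then the only singular point of $H$ (among the possible singular points $Q_\pm(z)$) is $Q_+(z)$; $H$ is regular at $Q_-(z)$, and at $Q_+(z)$ it has an integrable singularity with two branches (continuing twice around $Q_+$ returns $H$).
   Context: $Q(w)=w(w-1)(w-z)$. Critical points $w_\pm(z)=\frac13(z+1)\pm\frac13(z^2-z+1)^{1/2}$ (principal root), critical values $Q_\pm(z)=Q(w_\pm(z))\approx\mp\frac{\sqrt3}{36}$. With $u=\frac{3z-(z+1)^2}{3}$, $v=\frac1{27}\big(-2(z+1)^3+9z(z+1)-27Q\big)$ and principal branches, $w_k(Q,z)=\frac{z+1}{3}+2\left(-\frac u3\right)^{1/2}\cos\!\Big(\frac13\arccos\Big(\frac{3v}{2u}\big(-\frac3u\big)^{1/2}\Big)+\theta_k\Big)$, $\theta_0=\frac{2\pi}3,\theta_1=0,\theta_2=-\frac{2\pi}3$: the three roots of $w(w-1)(w-z)=Q$, holomorphic near $(Q,z)=(0,\frac12)$ with $w_0(0,z)=0,w_1(0,z)=1,w_2(0,z)=z$, continued analytically in $Q$. *)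

theory Defs
  imports "HOL-Analysis.Analysis"
begin

definition Qpoly :: "complex \<Rightarrow> complex \<Rightarrow> complex" where
  "Qpoly z w = w * (w - 1) * (w - z)"

text \<open>Critical points (principal square root).\<close>
definition wplus :: "complex \<Rightarrow> complex" where
  "wplus z = (z + 1) / 3 + csqrt (z\<^sup>2 - z + 1) / 3"

definition wminus :: "complex \<Rightarrow> complex" where
  "wminus z = (z + 1) / 3 - csqrt (z\<^sup>2 - z + 1) / 3"

definition Qplus :: "complex \<Rightarrow> complex" where
  "Qplus z = Qpoly z (wplus z)"

definition Qminus :: "complex \<Rightarrow> complex" where
  "Qminus z = Qpoly z (wminus z)"

definition uu :: "complex \<Rightarrow> complex" where
  "uu z = (3 * z - (z + 1)\<^sup>2) / 3"

definition vv :: "complex \<Rightarrow> complex \<Rightarrow> complex" where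
  "vv Q z = (- 2 * (z + 1) ^ 3 + 9 * z * (z + 1) - 27 * Q) / 27"

definition theta :: "nat \<Rightarrow> complex" where
  "theta k = (if k = 0 then of_real (2 * pi / 3) else if k = 1 then 0 else of_real (- 2 * pi / 3))"

text \<open>Trigonometric root formula with principal branches (csqrt, Arccos).\<close>
definition wk :: "nat \<Rightarrow> complex \<Rightarrow> complex \<Rightarrow> complex" where
  "wk k Q z = (z + 1) / 3 + 2 * csqrt (- uu z / 3) *
     cos (Arccos (3 * vv Q z / (2 * uu z) * csqrt (- 3 / uu z)) / 3 + theta k)"

definition HH :: "complex \<Rightarrow> complex \<Rightarrow> complex" where
  "HH z Q = 1 / ((wk 1 Q z - wk 0 Q z) * (wk 1 Q z - wk 2 Q z))"

end

theory Submission
  imports Defs "HOL-Complex_Analysis.Complex_Analysis"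
begin

(* With d = sqrt(z^2 - z + 1), the root formula turns H into 3 / (d^2 (4 c^2 - 1)), where
   c = cos(Arccos A / 3) solves the Chebyshev equation 4 c^3 - 3 c = A and A is an affine
   function of Q with A(Q_-) = 1 and A(Q_+) = -1.  On the strip |Re A| < 1, c is holomorphic
   and 4 c^2 = 1 would force A = 1 or A = -1.  At A = 1 the Chebyshev polynomial is locally
   invertible at c = 1, so c, and with it H, continues holomorphically past Q_-.  At A = -1
   the root c = 1/2 is double: writing A = -1 + sigma^2, the roots near 1/2 are 1/2 + E(sigma)
   and 1/2 + E(-sigma) with E holomorphic and E(0) = 0, E'(0) <> 0, so 4 c^2 - 1 = 4 E (1 + E)
   has a simple zero in sigma, and sigma is a constant multiple of s = sqrt(Q - Q_+).  Near any
   point of the segment, continuity singles out one of the two branches, which gives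
   H = g(s) / s with g(0) <> 0. *)

lemma holomorphic_local_inverse:
  fixes f :: "complex \<Rightarrow> complex"
  assumes "f holomorphic_on S" "open S" "a \<in> S" "deriv f a \<noteq> 0"
  obtains r g where "r > 0" "ball a r \<subseteq> S" "open (f ` ball a r)" "g holomorphic_on f ` ball a r"
    "\<And>x. x \<in> ball a r \<Longrightarrow> g (f x) = x"
proof -
  obtain r where r: "r > 0" "ball a r \<subseteq> S" "inj_on f (ball a r)"
    using has_complex_derivative_locally_injective[OF assms(1,3,2,4)] .
  have hol: "f holomorphic_on ball a r"
    using assms(1) r(2) by (rule holomorphic_on_subset)
  obtain g where "g holomorphic_on f ` ball a r" "\<And>x. x \<in> ball a r \<Longrightarrow> g (f x) = x"
    using holomorphic_has_inverse[OF hol open_ball r(3)] by metis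
  with r open_mapping_thm3[OF hol open_ball r(3)] show ?thesis
    using that by blast
qed

lemma holomorphic_injective_factor:
  assumes "f holomorphic_on ball a r" "inj_on f (ball a r)"
  obtains h where "h holomorphic_on ball a r" "\<forall>x\<in>ball a r. h x \<noteq> 0 \<and> f x = f a + (x - a) * h x"
proof -
  define h where "h x = (if x = a then deriv f a else (f x - f a) / (x - a))" for x
  have "h holomorphic_on ball a r"
    unfolding h_def[abs_def] using assms(1) by (rule pole_lemma_open) simp
  moreover have "h x \<noteq> 0 \<and> f x = f a + (x - a) * h x" if "x \<in> ball a r" for x
  proof (cases "x = a")
    case True
    then show ?thesis
      using holomorphic_injective_imp_regular[OF assms(1) open_ball assms(2) that] by (simp add: h_def)
  next
    case False
    have "a \<in> ball a r"
      using that by (auto intro: le_less_trans[OF zero_le_dist])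
    with False show ?thesis
      using inj_onD[OF assms(2) _ that] by (auto simp: h_def)
  qed
  ultimately show ?thesis
    using that by blast
qed

lemma eventually_eq_of_branches:
  fixes f g h :: "'a \<Rightarrow> 'b::metric_space"
  assumes "(f \<longlongrightarrow> c) F" "(h \<longlongrightarrow> c') F" "c \<noteq> c'" "\<forall>\<^sub>F y in F. f y = g y \<or> f y = h y"
  shows "\<forall>\<^sub>F y in F. f y = g y"
proof -
  have "((\<lambda>y. dist (f y) (h y)) \<longlongrightarrow> dist c c') F"
    using assms(1,2) by (rule tendsto_dist)
  then have "\<forall>\<^sub>F y in F. dist (f y) (h y) > 0"
    by (rule order_tendstoD) (simp add: assms(3))
  with assms(4) show ?thesis
    by eventually_elim auto
qed

lemma square_offset_in_open_segment:
  fixes q :: complex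
  assumes "q \<noteq> 0" "r > 0"
  obtains s where "s \<in> ball 0 r" "s \<noteq> 0" "q + s\<^sup>2 \<in> open_segment 0 q"
proof -
  define \<tau> where "\<tau> = min (1/2) (r\<^sup>2 / (2 * norm q))"
  have \<tau>: "0 < \<tau>" "\<tau> < 1"
    using assms by (auto simp: \<tau>_def)
  have "\<tau> * norm q \<le> r\<^sup>2 / (2 * norm q) * norm q"
    by (rule mult_right_mono) (auto simp: \<tau>_def)
  also have "\<dots> < r\<^sup>2"
    using assms by simp
  finally have \<tau>q: "\<tau> * norm q < r\<^sup>2" .
  define s where "s = csqrt (- (of_real \<tau> * q))"
  have s2: "s\<^sup>2 = - (of_real \<tau> * q)"
    by (simp add: s_def)
  have "(norm s)\<^sup>2 < r\<^sup>2"
    using \<tau> \<tau>q by (simp add: s2 flip: norm_power) (simp add: norm_mult)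
  then have "s \<in> ball 0 r"
    using assms(2) by (simp add: power_less_imp_less_base)
  moreover have "s \<noteq> 0"
    using \<tau>(1) assms(1) s2 by auto
  moreover have "q + s\<^sup>2 = of_real (1 - \<tau>) * q"
    by (simp add: s2 algebra_simps)
  then have "q + s\<^sup>2 \<in> open_segment 0 q"
    unfolding in_segment(2) using assms(1) \<tau>
    by (intro conjI exI[where x = "1 - \<tau>"]) (auto simp: scaleR_conv_of_real)
  ultimately show ?thesis
    using that by blast
qed

lemma isCont_Arccos_1: "isCont Arccos 1"
proof -
  have "((\<lambda>A. csqrt (1 - A\<^sup>2)) \<longlongrightarrow> 0) (at (1::complex))"
    by (rule tendsto_norm_zero_cancel) (auto intro!: tendsto_eq_intros)
  then have "((\<lambda>A. A + \<i> * csqrt (1 - A\<^sup>2)) \<longlongrightarrow> 1) (at (1::complex))"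
    by (auto intro!: tendsto_eq_intros)
  moreover have "isCont Ln (1::complex)"
    by (rule continuous_at_Ln) (simp add: complex_nonpos_Reals_iff)
  ultimately have "((\<lambda>A. - \<i> * Ln (A + \<i> * csqrt (1 - A\<^sup>2))) \<longlongrightarrow> - \<i> * Ln 1) (at (1::complex))"
    by (intro tendsto_mult_left isCont_tendsto_compose[of _ Ln])
  then show ?thesis
    unfolding isCont_def Arccos_def by simp
qed

lemma cos_minus_cos_third_turns:
  fixes a :: complex
  shows "(cos a - cos (a + of_real (2 * pi / 3))) * (cos a - cos (a - of_real (2 * pi / 3)))
           = 3 / 4 * (4 * (cos a)\<^sup>2 - 1)"
proof -
  let ?r = "complex_of_real (sqrt 3)"
  have "cos (complex_of_real (2 * pi / 3)) = - 1 / 2" "sin (complex_of_real (2 * pi / 3)) = ?r / 2"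
    by (simp_all only: cos_of_real sin_of_real cos_120 sin_120) simp_all
  then have c: "cos (a + of_real (2 * pi / 3)) = - cos a / 2 - ?r / 2 * sin a"
            "cos (a - of_real (2 * pi / 3)) = - cos a / 2 + ?r / 2 * sin a"
    by (simp_all add: cos_add cos_diff)
  have "(cos a - cos (a + of_real (2 * pi / 3))) * (cos a - cos (a - of_real (2 * pi / 3)))
               = 9 / 4 * (cos a)\<^sup>2 - ?r\<^sup>2 / 4 * (sin a)\<^sup>2"
    unfolding c by (simp add: algebra_simps power2_eq_square)
  also have "?r\<^sup>2 = 3"
    by (metis of_real_numeral of_real_power real_sqrt_pow2 zero_le_numeral)
  also have "9 / 4 * (cos a)\<^sup>2 - 3 / 4 * (sin a)\<^sup>2 = 3 / 4 * (4 * (cos a)\<^sup>2 - 1)"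
    by (simp add: sin_squared_eq field_simps)
  finally show ?thesis .
qed

section \<open>The Chebyshev equation 4 c^3 - 3 c = A\<close>

definition chebyshev3 :: "complex \<Rightarrow> complex" where
  "chebyshev3 c = 4 * c ^ 3 - 3 * c"

definition cos_third :: "complex \<Rightarrow> complex" where
  "cos_third A = cos (Arccos A / 3)"

definition unit_strip :: "complex set" where
  "unit_strip = {A. \<bar>Re A\<bar> < 1}"

lemma open_unit_strip: "open unit_strip"
proof -
  have "unit_strip = {A. Re A < 1} \<inter> {A. Re A > -1}"
    by (auto simp: unit_strip_def)
  then show ?thesis
    by (metis open_Int open_halfspace_Re_lt open_halfspace_Re_gt)
qed

lemma chebyshev3_cos_third: "chebyshev3 (cos_third A) = A"
  using cos_treble_cos[of "Arccos A / 3"] by (simp add: chebyshev3_def cos_third_def)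

lemma chebyshev3_roots:
  assumes "chebyshev3 a = A" "chebyshev3 b = A" "chebyshev3 c = A" "a \<noteq> b"
  shows "c = a \<or> c = b \<or> a + b + c = 0"
proof -
  have "(a - b) * (4 * (a\<^sup>2 + a * b + b\<^sup>2) - 3) = 0"
    using assms(1,2) by (simp add: chebyshev3_def algebra_simps power2_eq_square power3_eq_cube)
  then have ab: "4 * (a\<^sup>2 + a * b + b\<^sup>2) = 3"
    using assms(4) by simp
  have "(c - a) * (c - b) * (a + b + c)
          = ((chebyshev3 c - A) - (chebyshev3 a - A) - (c - a) * (4 * (a\<^sup>2 + a * b + b\<^sup>2) - 3)) / 4"
    by (simp add: chebyshev3_def field_simps power2_eq_square power3_eq_cube)
  also have "\<dots> = 0"
    using assms(1,3) ab by simp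
  finally show ?thesis
    by simp
qed

lemma cos_third_squared_quarter:
  assumes "4 * (cos_third A)\<^sup>2 = 1"
  shows "A = 1 \<or> A = - 1"
proof -
  have "A = cos_third A * (4 * (cos_third A)\<^sup>2) - 3 * cos_third A"
    using chebyshev3_cos_third[of A] by (simp add: chebyshev3_def power2_eq_square power3_eq_cube algebra_simps)
  then have "A = - 2 * cos_third A"
    using assms by simp
  then have "A\<^sup>2 = (- 2 * cos_third A)\<^sup>2"
    by (rule arg_cong)
  also have "\<dots> = 1"
    using assms by (simp add: power_mult_distrib)
  finally show ?thesis
    by (simp add: power2_eq_1_iff)
qed

lemma Re_cos_third_pos:
  assumes "A \<in> unit_strip"
  shows "Re (cos_third A) > 0"
proof -
  have "0 < Re (Arccos A) \<and> Re (Arccos A) < pi"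
    using assms by (intro Arccos_bounds) (simp add: unit_strip_def)
  then have "cos (Re (Arccos A) / 3) > 0"
    by (intro cos_gt_zero_pi) auto
  then show ?thesis
    by (simp add: cos_third_def Re_cos add_pos_pos)
qed

lemma holomorphic_on_cos_third_strip: "cos_third holomorphic_on unit_strip"
proof -
  have "Arccos holomorphic_on unit_strip"
    by (rule holomorphic_on_Arccos) (auto simp: unit_strip_def)
  then show ?thesis
    unfolding cos_third_def[abs_def] by (intro holomorphic_intros) auto
qed

lemma cos_third_near_1:
  obtains N where "open N" "1 \<in> N" "cos_third holomorphic_on N" "\<And>A. A \<in> N \<Longrightarrow> Re (cos_third A) > 1/2"
proof -
  have "(chebyshev3 has_field_derivative 9) (at 1)"
    unfolding chebyshev3_def[abs_def] by (auto intro!: derivative_eq_intros)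
  then have deriv: "deriv chebyshev3 1 \<noteq> 0"
    by (simp add: DERIV_imp_deriv)
  have hol: "chebyshev3 holomorphic_on ball 1 (1/2)"
    unfolding chebyshev3_def[abs_def] by (intro holomorphic_intros)
  have one: "1 \<in> ball (1::complex) (1/2)"
    by simp
  obtain r F where r: "r > 0" "ball (1::complex) r \<subseteq> ball 1 (1/2)" "open (chebyshev3 ` ball 1 r)"
    "F holomorphic_on chebyshev3 ` ball 1 r" "\<And>c. c \<in> ball 1 r \<Longrightarrow> F (chebyshev3 c) = c"
    using holomorphic_local_inverse[OF hol open_ball one deriv] by blast
  have "isCont cos_third 1"
    unfolding cos_third_def[abs_def] using isCont_Arccos_1 by (intro continuous_intros) auto
  moreover have "cos_third 1 = 1"
    by (simp add: cos_third_def)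
  ultimately obtain \<delta> where \<delta>: "\<delta> > 0" "\<And>A. dist A 1 < \<delta> \<Longrightarrow> cos_third A \<in> ball 1 r"
    using r(1) unfolding continuous_at_eps_delta by (metis dist_commute mem_ball)
  define N where "N = chebyshev3 ` ball 1 r \<inter> ball 1 \<delta>"
  have near: "cos_third A \<in> ball 1 r" if "A \<in> N" for A
    using \<delta>(2) that by (auto simp: N_def dist_commute)
  have "1 \<in> N"
    unfolding N_def using r(1) \<delta>(1) by (auto intro!: image_eqI[where x = 1] simp: chebyshev3_def)
  moreover have "cos_third holomorphic_on N"
  proof (rule holomorphic_transform)
    show "F holomorphic_on N"
      using r(4) by (rule holomorphic_on_subset) (auto simp: N_def)
    show "F A = cos_third A" if "A \<in> N" for A
      using r(5)[OF near[OF that]] by (simp add: chebyshev3_cos_third)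
  qed
  moreover have "Re (cos_third A) > 1/2" if "A \<in> N" for A
  proof -
    have "norm (1 - cos_third A) < 1/2"
      using near[OF that] r(2) by (auto simp: dist_norm)
    then show ?thesis
      using abs_Re_le_cmod[of "1 - cos_third A"] by simp
  qed
  moreover have "open N"
    using r(3) by (simp add: N_def open_Int)
  ultimately show ?thesis
    using that by blast
qed

lemma cos_third_regular_domain:
  obtains U where "open U" "unit_strip \<subseteq> U" "1 \<in> U" "cos_third holomorphic_on U"
    "\<And>A. A \<in> U \<Longrightarrow> 4 * (cos_third A)\<^sup>2 \<noteq> 1"
proof -
  obtain N where N: "open N" "1 \<in> N" "cos_third holomorphic_on N"
    "\<And>A. A \<in> N \<Longrightarrow> Re (cos_third A) > 1/2"
    using cos_third_near_1 by blast
  have "4 * (cos_third A)\<^sup>2 \<noteq> 1" if "A \<in> unit_strip \<union> N" for A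
  proof
    assume quarter: "4 * (cos_third A)\<^sup>2 = 1"
    then have "A \<notin> unit_strip"
      using cos_third_squared_quarter by (force simp: unit_strip_def)
    then have "Re (cos_third A) > 1/2"
      using that N(4) by blast
    moreover have "(2 * cos_third A - 1) * (2 * cos_third A + 1) = 0"
      using quarter by (simp add: power2_eq_square algebra_simps)
    ultimately show False
      by (auto dest!: arg_cong[where f = Re])
  qed
  moreover have "cos_third holomorphic_on unit_strip \<union> N"
    using holomorphic_on_cos_third_strip N open_unit_strip by (intro holomorphic_on_Un)
  ultimately show ?thesis
    using that[of "unit_strip \<union> N"] N open_unit_strip by blast
qed

lemma chebyshev3_branch_at_minus_1:
  obtains \<eta> E where "\<eta> > 0" "E holomorphic_on ball 0 \<eta>" "inj_on E (ball 0 \<eta>)" "E 0 = 0"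
    "\<forall>\<sigma>\<in>ball 0 \<eta>. norm (E \<sigma>) < 1/4 \<and> chebyshev3 (1/2 + E \<sigma>) = - 1 + \<sigma>\<^sup>2"
proof -
  \<comment> \<open>chebyshev3 (1/2 + e) = -1 + e^2 (6 + 4 e), so E is a local inverse of \<psi>\<close>
  define \<psi> where "\<psi> e = e * csqrt (6 + 4 * e)" for e :: complex
  have not_nonpos: "6 + 4 * e \<notin> \<real>\<^sub>\<le>\<^sub>0" if "e \<in> ball 0 (1/4)" for e :: complex
    using that abs_Re_le_cmod[of e] by (auto simp: complex_nonpos_Reals_iff)
  have hol: "\<psi> holomorphic_on ball 0 (1/4)"
    unfolding \<psi>_def[abs_def] using not_nonpos by (intro holomorphic_intros) auto
  have "(\<psi> has_field_derivative csqrt 6) (at 0)"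
    unfolding \<psi>_def[abs_def] using not_nonpos[of 0] by (auto intro!: derivative_eq_intros)
  then have deriv: "deriv \<psi> 0 \<noteq> 0"
    by (simp add: DERIV_imp_deriv)
  have zero: "0 \<in> ball (0::complex) (1/4)"
    by simp
  obtain r E where r: "r > 0" "ball 0 r \<subseteq> ball (0::complex) (1/4)" "open (\<psi> ` ball 0 r)"
    "E holomorphic_on \<psi> ` ball 0 r" "\<And>e. e \<in> ball 0 r \<Longrightarrow> E (\<psi> e) = e"
    using holomorphic_local_inverse[OF hol open_ball zero deriv] by blast
  have "0 \<in> \<psi> ` ball 0 r"
    using r(1) by (auto intro!: image_eqI[where x = 0] simp: \<psi>_def)
  then obtain \<eta> where \<eta>: "\<eta> > 0" "ball 0 \<eta> \<subseteq> \<psi> ` ball 0 r"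
    using r(3) openE by blast
  have branch: "norm (E \<sigma>) < 1/4 \<and> chebyshev3 (1/2 + E \<sigma>) = - 1 + \<sigma>\<^sup>2 \<and> \<psi> (E \<sigma>) = \<sigma>"
    if \<sigma>: "\<sigma> \<in> ball 0 \<eta>" for \<sigma>
  proof -
    obtain e where e: "e \<in> ball 0 r" "\<sigma> = \<psi> e"
      using \<sigma> \<eta>(2) by blast
    have "\<sigma>\<^sup>2 = e\<^sup>2 * (6 + 4 * e)"
      unfolding e(2) \<psi>_def by (simp add: power_mult_distrib)
    then show ?thesis
      using e r(2,5) by (auto simp: chebyshev3_def power2_eq_square power3_eq_cube algebra_simps)
  qed
  have "inj_on E (ball 0 \<eta>)"
    by (metis branch inj_onI)
  moreover have "E 0 = 0"
    using r(1) r(5)[of 0] by (simp add: \<psi>_def)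
  moreover have "E holomorphic_on ball 0 \<eta>"
    using r(4) \<eta>(2) by (rule holomorphic_on_subset)
  ultimately show ?thesis
    using that \<eta>(1) branch by blast
qed

lemma chebyshev3_roots_near_minus_1:
  assumes inj: "inj_on E (ball 0 \<eta>)"
    and branch: "\<forall>\<sigma>\<in>ball 0 \<eta>. norm (E \<sigma>) < 1/4 \<and> chebyshev3 (1/2 + E \<sigma>) = - 1 + \<sigma>\<^sup>2"
    and \<sigma>: "\<sigma> \<in> ball 0 \<eta>" "\<sigma> \<noteq> 0"
    and c: "chebyshev3 c = - 1 + \<sigma>\<^sup>2" "Re c > 0"
  shows "c = 1/2 + E \<sigma> \<or> c = 1/2 + E (- \<sigma>)"
proof -
  have minus: "- \<sigma> \<in> ball 0 \<eta>"
    using \<sigma>(1) by simp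
  have "E \<sigma> \<noteq> E (- \<sigma>)"
    using inj \<sigma> minus by (auto dest: inj_onD)
  then have "c = 1/2 + E \<sigma> \<or> c = 1/2 + E (- \<sigma>) \<or> (1/2 + E \<sigma>) + (1/2 + E (- \<sigma>)) + c = 0"
    using branch \<sigma>(1) minus c(1) by (intro chebyshev3_roots) auto
  moreover have "\<bar>Re (E \<sigma>)\<bar> < 1/4" "\<bar>Re (E (- \<sigma>))\<bar> < 1/4"
    using branch \<sigma>(1) minus abs_Re_le_cmod le_less_trans by blast+
  then have "Re ((1/2 + E \<sigma>) + (1/2 + E (- \<sigma>)) + c) > 0"
    using c(2) unfolding abs_less_iff by simp
  ultimately show ?thesis
    by (metis less_irrefl zero_complex.sel(1))
qed

lemma cos_third_follows_branch:
  assumes E: "E holomorphic_on ball 0 \<eta>" "inj_on E (ball 0 \<eta>)"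
      "\<forall>\<sigma>\<in>ball 0 \<eta>. norm (E \<sigma>) < 1/4 \<and> chebyshev3 (1/2 + E \<sigma>) = - 1 + \<sigma>\<^sup>2"
    and \<sigma>0: "\<sigma>0 \<in> ball 0 \<eta>" "\<sigma>0 \<noteq> 0" "- 1 + \<sigma>0\<^sup>2 \<in> unit_strip" "cos_third (- 1 + \<sigma>0\<^sup>2) = 1/2 + E \<sigma>0"
  shows "\<forall>\<^sub>F \<sigma> in nhds \<sigma>0. cos_third (- 1 + \<sigma>\<^sup>2) = 1/2 + E \<sigma>"
proof (rule eventually_eq_of_branches[where c = "1/2 + E \<sigma>0" and c' = "1/2 + E (- \<sigma>0)"])
  have ident: "((\<lambda>\<sigma>. \<sigma>) \<longlongrightarrow> \<sigma>0) (nhds \<sigma>0)"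
    by (rule filterlim_ident)
  have "isCont cos_third (- 1 + \<sigma>0\<^sup>2)"
    using holomorphic_on_imp_continuous_on[OF holomorphic_on_cos_third_strip] open_unit_strip \<sigma>0(3)
      continuous_on_eq_continuous_at by blast
  then show "((\<lambda>\<sigma>. cos_third (- 1 + \<sigma>\<^sup>2)) \<longlongrightarrow> 1/2 + E \<sigma>0) (nhds \<sigma>0)"
    unfolding \<sigma>0(4)[symmetric] by (intro isCont_tendsto_compose[where g = cos_third] tendsto_intros ident)
  have "- \<sigma>0 \<in> ball 0 \<eta>"
    using \<sigma>0(1) by simp
  then have "isCont E (- \<sigma>0)"
    using holomorphic_on_imp_continuous_on[OF E(1)] continuous_on_eq_continuous_at[OF open_ball] by blast
  then show "((\<lambda>\<sigma>. 1/2 + E (- \<sigma>)) \<longlongrightarrow> 1/2 + E (- \<sigma>0)) (nhds \<sigma>0)"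
    by (intro isCont_tendsto_compose[where g = E] tendsto_intros ident)
  show "1/2 + E \<sigma>0 \<noteq> 1/2 + E (- \<sigma>0)"
    using inj_onD[OF E(2), of \<sigma>0 "- \<sigma>0"] \<sigma>0(1,2) by auto
  let ?S = "(ball 0 \<eta> - {0}) \<inter> (\<lambda>\<sigma>. - 1 + \<sigma>\<^sup>2) -` unit_strip"
  have "open ?S"
    by (intro open_Int open_Diff open_ball closed_singleton continuous_open_vimage open_unit_strip)
      (intro continuous_intros)
  then have "\<forall>\<^sub>F \<sigma> in nhds \<sigma>0. \<sigma> \<in> ?S"
    using \<sigma>0 by (intro eventually_nhds_in_open) auto
  then show "\<forall>\<^sub>F \<sigma> in nhds \<sigma>0. cos_third (- 1 + \<sigma>\<^sup>2) = 1/2 + E \<sigma> \<or> cos_third (- 1 + \<sigma>\<^sup>2) = 1/2 + E (- \<sigma>)"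
  proof eventually_elim
    case (elim \<sigma>)
    then show ?case
      using chebyshev3_roots_near_minus_1[OF E(2,3), of \<sigma> "cos_third (- 1 + \<sigma>\<^sup>2)"]
      by (simp add: chebyshev3_cos_third Re_cos_third_pos)
  qed
qed

section \<open>The germ H\<close>

definition disc_root :: "complex \<Rightarrow> complex" where
  "disc_root z = csqrt (z\<^sup>2 - z + 1)"

(* The argument 3 v / (2 u) * sqrt (-3 / u) of Arccos in the root formula, simplified with
   u = - d^2 / 3 (see wk_eq_cos). *)
definition cheb_arg :: "complex \<Rightarrow> complex \<Rightarrow> complex" where
  "cheb_arg z Q = - 27 * vv Q z / (2 * disc_root z ^ 3)"

lemma disc_root_squared: "(disc_root z)\<^sup>2 = z\<^sup>2 - z + 1"
  by (simp add: disc_root_def)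

lemma Re_disc_root_pos:
  assumes "Re (z\<^sup>2 - z + 1) > 0"
  shows "Re (disc_root z) > 0"
proof (rule ccontr)
  assume "\<not> Re (disc_root z) > 0"
  with csqrt_principal[of "z\<^sup>2 - z + 1"] have "Re (disc_root z) = 0"
    unfolding disc_root_def by auto
  then have "Re ((disc_root z)\<^sup>2) \<le> 0" by (simp add: Re_power2)
  with assms show False by (simp add: disc_root_squared)
qed

lemma disc_root_nonzero: "Re (z\<^sup>2 - z + 1) > 0 \<Longrightarrow> disc_root z \<noteq> 0"
  using Re_disc_root_pos by force

lemma wk_eq_cos:
  assumes "Re (z\<^sup>2 - z + 1) > 0"
  shows "wk k Q z = (z + 1) / 3 + 2 * (disc_root z / 3) * cos (Arccos (cheb_arg z Q) / 3 + theta k)"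
proof -
  let ?d = "disc_root z"
  have d: "Re ?d > 0" "?d \<noteq> 0"
    using Re_disc_root_pos[OF assms] disc_root_nonzero[OF assms] by auto
  have uu: "uu z = - ?d\<^sup>2 / 3"
    unfolding uu_def disc_root_squared by (simp add: power2_eq_square algebra_simps)
  have r: "csqrt (- uu z / 3) = ?d / 3"
    using d by (intro csqrt_unique) (simp_all add: uu power2_eq_square)
  have s: "csqrt (- 3 / uu z) = 3 / ?d"
  proof (rule csqrt_unique)
    show "(3 / ?d)\<^sup>2 = - 3 / uu z" using d by (simp add: uu power2_eq_square field_simps)
    show "0 < Re (3 / ?d) \<or> Re (3 / ?d) = 0 \<and> 0 \<le> Im (3 / ?d)"
      using d by (simp add: Re_divide divide_pos_pos complex_neq_0 power2_eq_square)
  qed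
  have arg: "3 * vv Q z / (2 * uu z) * (3 / ?d) = cheb_arg z Q"
    using d unfolding cheb_arg_def uu by (simp add: field_simps power2_eq_square power3_eq_cube)
  show ?thesis
    unfolding wk_def r s arg ..
qed

lemma HH_eq_cos_third:
  assumes "Re (z\<^sup>2 - z + 1) > 0"
  shows "HH z Q = 3 / ((disc_root z)\<^sup>2 * (4 * (cos_third (cheb_arg z Q))\<^sup>2 - 1))"
proof -
  define a where "a = Arccos (cheb_arg z Q) / 3"
  have "(wk 1 Q z - wk 0 Q z) * (wk 1 Q z - wk 2 Q z)
          = 4 * (disc_root z / 3)\<^sup>2 * ((cos a - cos (a + of_real (2 * pi / 3))) * (cos a - cos (a - of_real (2 * pi / 3))))"
    unfolding wk_eq_cos[OF assms] a_def[symmetric] by (simp add: theta_def power2_eq_square algebra_simps)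
  also have "\<dots> = (disc_root z)\<^sup>2 * (4 * (cos a)\<^sup>2 - 1) / 3"
    unfolding cos_minus_cos_third_turns by (simp add: power2_eq_square)
  finally have P: "(wk 1 Q z - wk 0 Q z) * (wk 1 Q z - wk 2 Q z) = (disc_root z)\<^sup>2 * (4 * (cos a)\<^sup>2 - 1) / 3" .
  show ?thesis
    unfolding HH_def P cos_third_def a_def by simp
qed

lemma cheb_arg_affine: "cheb_arg z Q = cheb_arg z 0 + 27 / (2 * disc_root z ^ 3) * Q"
proof -
  have "vv 0 z = vv Q z + Q"
    by (simp add: vv_def field_simps)
  then show ?thesis
    unfolding cheb_arg_def by (simp add: diff_divide_distrib add_divide_distrib[symmetric] algebra_simps)
qed

lemma cheb_arg_eq_affine: "cheb_arg z = (\<lambda>Q. cheb_arg z 0 + 27 / (2 * disc_root z ^ 3) * Q)"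
  by (rule ext) (rule cheb_arg_affine)

lemma vv_Qpoly_shift: "vv (Qpoly z ((z + 1) / 3 + t)) z = (disc_root z)\<^sup>2 * t / 3 - t ^ 3"
  unfolding vv_def Qpoly_def disc_root_squared by (simp add: field_simps power2_eq_square power3_eq_cube)

lemma cheb_arg_Qplus: "disc_root z \<noteq> 0 \<Longrightarrow> cheb_arg z (Qplus z) = - 1"
  using vv_Qpoly_shift[of z "disc_root z / 3"]
  by (simp add: Qplus_def wplus_def cheb_arg_def disc_root_def field_simps power2_eq_square power3_eq_cube)

lemma cheb_arg_Qminus: "disc_root z \<noteq> 0 \<Longrightarrow> cheb_arg z (Qminus z) = 1"
  using vv_Qpoly_shift[of z "- disc_root z / 3"]
  by (simp add: Qminus_def wminus_def cheb_arg_def disc_root_def field_simps power2_eq_square power3_eq_cube)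

lemma holomorphic_on_HH:
  assumes "Re (z\<^sup>2 - z + 1) > 0" "cos_third holomorphic_on U"
    "\<And>A. A \<in> U \<Longrightarrow> 4 * (cos_third A)\<^sup>2 \<noteq> 1"
  shows "HH z holomorphic_on cheb_arg z -` U"
proof (rule holomorphic_transform)
  have "cheb_arg z holomorphic_on cheb_arg z -` U"
    by (subst cheb_arg_eq_affine) (intro holomorphic_intros)
  then have "cos_third \<circ> cheb_arg z holomorphic_on cheb_arg z -` U"
    using assms(2) by (rule holomorphic_on_compose_gen) auto
  then show "(\<lambda>Q. 3 / ((disc_root z)\<^sup>2 * (4 * (cos_third (cheb_arg z Q))\<^sup>2 - 1)))
               holomorphic_on cheb_arg z -` U"
    using assms(3) disc_root_nonzero[OF assms(1)] by (intro holomorphic_intros) (auto simp: o_def)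
qed (simp add: HH_eq_cos_third[OF assms(1)])

lemma open_vimage_cheb_arg:
  assumes "open U"
  shows "open (cheb_arg z -` U)"
proof (rule continuous_open_vimage[OF assms])
  show "isCont (cheb_arg z) Q" for Q
    by (subst cheb_arg_eq_affine) (intro continuous_intros)
qed

lemma cheb_arg_segment_in_strip:
  assumes "cheb_arg z 0 \<in> unit_strip" "\<bar>Re (cheb_arg z b)\<bar> \<le> 1" "x \<in> closed_segment 0 b" "x \<noteq> b"
  shows "cheb_arg z x \<in> unit_strip"
proof -
  obtain u where u: "0 \<le> u" "u < 1" "x = of_real u * b"
    using assms(3,4) by (auto simp: in_segment scaleR_conv_of_real)
  let ?a = "Re (cheb_arg z 0)" and ?b = "Re (cheb_arg z b)"
  have "cheb_arg z x = cheb_arg z 0 + of_real u * (cheb_arg z b - cheb_arg z 0)"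
    using cheb_arg_affine[of z x] cheb_arg_affine[of z b] u(3) by (simp add: algebra_simps)
  then have "Re (cheb_arg z x) = (1 - u) * ?a + u * ?b"
    by (simp only: plus_complex.sel times_complex.sel minus_complex.sel Re_complex_of_real Im_complex_of_real)
      (simp add: algebra_simps)
  moreover have "\<bar>(1 - u) * ?a\<bar> < 1 - u" "\<bar>u * ?b\<bar> \<le> u"
    using assms(1,2) u by (simp_all add: unit_strip_def abs_mult mult_left_le)
  ultimately show ?thesis
    by (simp add: unit_strip_def)
qed

lemma eventually_near_half: "\<forall>\<^sub>F z in nhds (1/2). Re (z\<^sup>2 - z + 1) > 0 \<and> cheb_arg z 0 \<in> unit_strip"
proof -
  have ident: "((\<lambda>z. z) \<longlongrightarrow> 1/2) (nhds (1/2 :: complex))"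
    by (rule filterlim_ident)
  then have "((\<lambda>z. z\<^sup>2 - z + 1) \<longlongrightarrow> 3/4) (nhds (1/2 :: complex))"
    by (auto intro!: tendsto_eq_intros simp: power2_eq_square)
  from tendsto_Re[OF this] have "\<forall>\<^sub>F z in nhds (1/2). Re (z\<^sup>2 - z + 1) > 0"
    by (rule order_tendstoD) simp
  moreover have "isCont (\<lambda>z. cheb_arg z 0) (1/2)"
    unfolding cheb_arg_def disc_root_def vv_def
    by (intro continuous_intros) (auto simp: complex_nonpos_Reals_iff power2_eq_square)
  from isCont_tendsto_compose[OF this ident] have "((\<lambda>z. cheb_arg z 0) \<longlongrightarrow> 0) (nhds (1/2))"
    by (simp add: cheb_arg_def vv_def power3_eq_cube)
  from tendsto_rabs[OF tendsto_Re[OF this]]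
  have "\<forall>\<^sub>F z in nhds (1/2). cheb_arg z 0 \<in> unit_strip"
    unfolding unit_strip_def mem_Collect_eq by (rule order_tendstoD) simp
  ultimately show ?thesis
    by (rule eventually_conj)
qed

lemma cheb_arg_near_Qplus:
  assumes "disc_root z \<noteq> 0" "\<kappa>\<^sup>2 = 27 / (2 * disc_root z ^ 3)"
  shows "cheb_arg z (Qplus z + s\<^sup>2) = - 1 + (\<kappa> * s)\<^sup>2"
  using cheb_arg_affine[of z "Qplus z + s\<^sup>2"] cheb_arg_affine[of z "Qplus z"] cheb_arg_Qplus[OF assms(1)]
  by (simp add: assms(2) power_mult_distrib add_divide_distrib algebra_simps)

lemma HH_simple_pole_form:
  assumes "Re (z\<^sup>2 - z + 1) > 0" "cos_third (cheb_arg z Q) = 1/2 + \<kappa> * s * q" "s \<noteq> 0"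
  shows "HH z Q = 3 / (4 * (disc_root z)\<^sup>2 * \<kappa> * (1 + \<kappa> * s * q) * q) / s"
proof -
  have denominator: "4 * (1/2 + \<kappa> * s * q)\<^sup>2 - 1 = 4 * \<kappa> * s * q * (1 + \<kappa> * s * q)"
    by (simp add: power2_eq_square algebra_simps)
  show ?thesis
    unfolding HH_eq_cos_third[OF assms(1)] assms(2) denominator divide_divide_eq_left
    by (simp add: ac_simps)
qed

lemma cos_third_near_Qplus:
  assumes z: "Re (z\<^sup>2 - z + 1) > 0" and a0: "cheb_arg z 0 \<in> unit_strip"
    and E: "\<eta> > 0" "E holomorphic_on ball 0 \<eta>" "inj_on E (ball 0 \<eta>)"
      "\<forall>\<sigma>\<in>ball 0 \<eta>. norm (E \<sigma>) < 1/4 \<and> chebyshev3 (1/2 + E \<sigma>) = - 1 + \<sigma>\<^sup>2"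
  obtains \<kappa> r s0 where "\<kappa>\<^sup>2 = 27 / (2 * disc_root z ^ 3)" "r > 0" "\<forall>s\<in>ball 0 r. \<kappa> * s \<in> ball 0 \<eta>"
    "s0 \<in> ball 0 r" "s0 \<noteq> 0" "Qplus z + s0\<^sup>2 \<in> open_segment 0 (Qplus z)"
    "\<forall>\<^sub>F s in nhds s0. cos_third (- 1 + (\<kappa> * s)\<^sup>2) = 1/2 + E (\<kappa> * s)"
proof -
  have d: "disc_root z \<noteq> 0"
    using disc_root_nonzero[OF z] .
  define \<kappa>0 where "\<kappa>0 = csqrt (27 / (2 * disc_root z ^ 3))"
  have \<kappa>0: "\<kappa>0 \<noteq> 0" "\<kappa>0\<^sup>2 = 27 / (2 * disc_root z ^ 3)"
    using d by (simp_all add: \<kappa>0_def)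
  have "Qplus z \<noteq> 0"
    using a0 cheb_arg_Qplus[OF d] by (auto simp: unit_strip_def)
  define r where "r = \<eta> / norm \<kappa>0"
  have r: "r > 0"
    using E(1) \<kappa>0(1) by (simp add: r_def)
  have scaled: "\<kappa> * s \<in> ball 0 \<eta>" if "s \<in> ball 0 r" "norm \<kappa> = norm \<kappa>0" for \<kappa> s :: complex
    using that \<kappa>0(1) by (simp add: r_def norm_mult field_simps)
  obtain s0 where s0: "s0 \<in> ball 0 r" "s0 \<noteq> 0" "Qplus z + s0\<^sup>2 \<in> open_segment 0 (Qplus z)"
    using square_offset_in_open_segment[OF \<open>Qplus z \<noteq> 0\<close> r] by blast
  have strip: "- 1 + (\<kappa>0 * s0)\<^sup>2 \<in> unit_strip"
    using cheb_arg_segment_in_strip[OF a0, of "Qplus z" "Qplus z + s0\<^sup>2"] s0(2,3)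
      cheb_arg_near_Qplus[OF d \<kappa>0(2)] cheb_arg_Qplus[OF d]
    by (auto simp: open_closed_segment)
  have "cos_third (- 1 + (\<kappa>0 * s0)\<^sup>2) = 1/2 + E (\<kappa>0 * s0) \<or>
        cos_third (- 1 + (\<kappa>0 * s0)\<^sup>2) = 1/2 + E (- (\<kappa>0 * s0))"
    using chebyshev3_roots_near_minus_1[OF E(3,4) scaled[OF s0(1), of \<kappa>0] _ chebyshev3_cos_third
        Re_cos_third_pos[OF strip]] \<kappa>0(1) s0(2)
    by simp
  then obtain \<kappa> where "\<kappa> = \<kappa>0 \<or> \<kappa> = - \<kappa>0" "cos_third (- 1 + (\<kappa>0 * s0)\<^sup>2) = 1/2 + E (\<kappa> * s0)"
    using mult_minus_left[of \<kappa>0 s0] by metis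
  then have \<kappa>: "\<kappa>\<^sup>2 = \<kappa>0\<^sup>2" "norm \<kappa> = norm \<kappa>0" "cos_third (- 1 + (\<kappa> * s0)\<^sup>2) = 1/2 + E (\<kappa> * s0)"
    by (auto simp: power_mult_distrib)
  have "\<forall>\<^sub>F \<sigma> in nhds (\<kappa> * s0). cos_third (- 1 + \<sigma>\<^sup>2) = 1/2 + E \<sigma>"
    using \<kappa> strip \<kappa>0(1) s0(2) by (intro cos_third_follows_branch[OF E(2-4) scaled[OF s0(1) \<kappa>(2)]])
      (auto simp: power_mult_distrib)
  moreover have "((\<lambda>s. \<kappa> * s) \<longlongrightarrow> \<kappa> * s0) (nhds s0)"
    by (intro tendsto_intros filterlim_ident)
  ultimately have "\<forall>\<^sub>F s in nhds s0. cos_third (- 1 + (\<kappa> * s)\<^sup>2) = 1/2 + E (\<kappa> * s)"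
    by (rule eventually_compose_filterlim)
  then show ?thesis
    using that[of \<kappa> r s0] \<kappa> \<kappa>0(2) r s0 scaled by auto
qed

lemma HH_near_Qplus:
  assumes z: "Re (z\<^sup>2 - z + 1) > 0" and a0: "cheb_arg z 0 \<in> unit_strip"
  shows "\<exists>r g s0. r > 0 \<and> g holomorphic_on ball 0 r \<and> g 0 \<noteq> 0 \<and>
           s0 \<in> ball 0 r \<and> s0 \<noteq> 0 \<and> Qplus z + s0\<^sup>2 \<in> open_segment 0 (Qplus z) \<and>
           (\<forall>\<^sub>F s in at s0. HH z (Qplus z + s\<^sup>2) = g s / s)"
proof -
  obtain \<eta> E where E: "\<eta> > 0" "E holomorphic_on ball 0 \<eta>" "inj_on E (ball 0 \<eta>)" "E 0 = 0"
    "\<forall>\<sigma>\<in>ball 0 \<eta>. norm (E \<sigma>) < 1/4 \<and> chebyshev3 (1/2 + E \<sigma>) = - 1 + \<sigma>\<^sup>2"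
    using chebyshev3_branch_at_minus_1 by blast
  obtain q where q: "q holomorphic_on ball 0 \<eta>" "\<forall>\<sigma>\<in>ball 0 \<eta>. q \<sigma> \<noteq> 0 \<and> E \<sigma> = \<sigma> * q \<sigma>"
    using holomorphic_injective_factor[OF E(2,3)] E(4) by auto
  obtain \<kappa> r s0 where \<kappa>: "\<kappa>\<^sup>2 = 27 / (2 * disc_root z ^ 3)" and r: "r > 0" "\<forall>s\<in>ball 0 r. \<kappa> * s \<in> ball 0 \<eta>"
    and s0: "s0 \<in> ball 0 r" "s0 \<noteq> 0" "Qplus z + s0\<^sup>2 \<in> open_segment 0 (Qplus z)"
    and branch: "\<forall>\<^sub>F s in nhds s0. cos_third (- 1 + (\<kappa> * s)\<^sup>2) = 1/2 + E (\<kappa> * s)"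
    using cos_third_near_Qplus[OF z a0 E(1-3,5)] by blast
  have d: "disc_root z \<noteq> 0" "\<kappa> \<noteq> 0"
    using disc_root_nonzero[OF z] \<kappa> by auto
  define g where "g s = 3 / (4 * (disc_root z)\<^sup>2 * \<kappa> * (1 + E (\<kappa> * s)) * q (\<kappa> * s))" for s
  have "\<forall>\<^sub>F s in nhds s0. s \<in> ball 0 r - {0}"
    using s0(1,2) by (intro eventually_nhds_in_open) auto
  with branch have "\<forall>\<^sub>F s in at s0. cos_third (- 1 + (\<kappa> * s)\<^sup>2) = 1/2 + E (\<kappa> * s) \<and> s \<in> ball 0 r - {0}"
    by (intro filter_leD[OF at_within_le_nhds] eventually_conj)
  then have "\<forall>\<^sub>F s in at s0. HH z (Qplus z + s\<^sup>2) = g s / s"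
  proof eventually_elim
    case (elim s)
    then have "E (\<kappa> * s) = \<kappa> * s * q (\<kappa> * s)"
      using q(2) r(2) by auto
    with elim show ?case
      using HH_simple_pole_form[OF z, of "Qplus z + s\<^sup>2" \<kappa> s] cheb_arg_near_Qplus[OF d(1) \<kappa>]
      by (simp add: g_def)
  qed
  moreover have "g holomorphic_on ball 0 r"
  proof -
    have "(E \<circ> (\<lambda>s. \<kappa> * s)) holomorphic_on ball 0 r" "(q \<circ> (\<lambda>s. \<kappa> * s)) holomorphic_on ball 0 r"
      using E(2) q(1) r(2) by (auto intro!: holomorphic_on_compose_gen holomorphic_intros)
    moreover have "1 + E (\<kappa> * s) \<noteq> 0" "q (\<kappa> * s) \<noteq> 0" if "s \<in> ball 0 r" for s
    proof -
      have "norm (E (\<kappa> * s)) < 1/4" "q (\<kappa> * s) \<noteq> 0"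
        using E(5) q(2) r(2) that by blast+
      then show "1 + E (\<kappa> * s) \<noteq> 0" "q (\<kappa> * s) \<noteq> 0"
        by (auto simp: add_eq_0_iff)
    qed
    ultimately show ?thesis
      unfolding g_def[abs_def] using d by (intro holomorphic_intros) (auto simp: o_def)
  qed
  moreover have "g 0 \<noteq> 0"
    using d E(1,4) q(2) by (simp add: g_def)
  ultimately show ?thesis
    using r(1) s0 by blast
qed

lemma HH_continuation_near_critical_values:
  assumes z: "Re (z\<^sup>2 - z + 1) > 0" and a0: "cheb_arg z 0 \<in> unit_strip"
  shows "(\<exists>S f. open S \<and> closed_segment 0 (Qminus z) \<subseteq> S \<and> f holomorphic_on S \<and>
            (\<forall>\<^sub>F Q in nhds 0. f Q = HH z Q)) \<and>
         (\<exists>S f r g s0. open S \<and> closed_segment 0 (Qplus z) - {Qplus z} \<subseteq> S \<and>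
            f holomorphic_on S \<and> (\<forall>\<^sub>F Q in nhds 0. f Q = HH z Q) \<and>
            r > 0 \<and> g holomorphic_on ball 0 r \<and> g 0 \<noteq> 0 \<and>
            s0 \<in> ball 0 r \<and> s0 \<noteq> 0 \<and> Qplus z + s0\<^sup>2 \<in> open_segment 0 (Qplus z) \<and>
            (\<forall>\<^sub>F s in at s0. f (Qplus z + s\<^sup>2) = g s / s))"
proof -
  obtain U where U: "open U" "unit_strip \<subseteq> U" "1 \<in> U" "cos_third holomorphic_on U"
    "\<And>A. A \<in> U \<Longrightarrow> 4 * (cos_third A)\<^sup>2 \<noteq> 1"
    using cos_third_regular_domain by blast
  have d: "disc_root z \<noteq> 0"
    using disc_root_nonzero[OF z] .
  let ?S = "cheb_arg z -` U"
  have S: "open ?S" "HH z holomorphic_on ?S" "\<forall>\<^sub>F Q in nhds 0. HH z Q = HH z Q"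
    using open_vimage_cheb_arg[OF U(1)] holomorphic_on_HH[OF z U(4,5)] by simp_all
  have minus: "closed_segment 0 (Qminus z) \<subseteq> ?S"
  proof
    fix x assume "x \<in> closed_segment 0 (Qminus z)"
    then show "x \<in> ?S"
      using cheb_arg_segment_in_strip[OF a0, of "Qminus z" x] cheb_arg_Qminus[OF d] U(2,3)
      by (cases "x = Qminus z") auto
  qed
  have plus: "closed_segment 0 (Qplus z) - {Qplus z} \<subseteq> ?S"
    using cheb_arg_segment_in_strip[OF a0, of "Qplus z"] cheb_arg_Qplus[OF d] U(2) by auto
  obtain r g s0 where pole: "r > 0" "g holomorphic_on ball 0 r" "g 0 \<noteq> 0" "s0 \<in> ball 0 r" "s0 \<noteq> 0"
    "Qplus z + s0\<^sup>2 \<in> open_segment 0 (Qplus z)" "\<forall>\<^sub>F s in at s0. HH z (Qplus z + s\<^sup>2) = g s / s"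
    using HH_near_Qplus[OF z a0] by blast
  show ?thesis
    by (intro conjI; (rule exI[of _ ?S], rule exI[of _ "HH z"])) (use S minus plus pole in blast)+
qed

theorem lemma2p2:
  "\<exists>\<epsilon>>0. \<forall>z. dist z (1/2) < \<epsilon> \<longrightarrow>
     \<comment> \<open>regular at Q_-: the continuation of the germ along [0, Q_-] extends holomorphically past Q_-\<close>
     (\<exists>S f. open S \<and> closed_segment 0 (Qminus z) \<subseteq> S \<and> f holomorphic_on S \<and>
            (\<forall>\<^sub>F Q in nhds 0. f Q = HH z Q)) \<and>
     \<comment> \<open>at Q_+: continuation along [0, Q_+) has the form g(s)/s with s^2 = Q - Q_+, g(0) \<noteq> 0\<close>
     (\<exists>S f r g s0. open S \<and> closed_segment 0 (Qplus z) - {Qplus z} \<subseteq> S \<and>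
            f holomorphic_on S \<and> (\<forall>\<^sub>F Q in nhds 0. f Q = HH z Q) \<and>
            r > 0 \<and> g holomorphic_on ball 0 r \<and> g 0 \<noteq> 0 \<and>
            s0 \<in> ball 0 r \<and> s0 \<noteq> 0 \<and> Qplus z + s0\<^sup>2 \<in> open_segment 0 (Qplus z) \<and>
            (\<forall>\<^sub>F s in at s0. f (Qplus z + s\<^sup>2) = g s / s))"
proof -
  obtain \<epsilon> where "\<epsilon> > 0" "\<And>z. dist z (1/2) < \<epsilon> \<Longrightarrow> Re (z\<^sup>2 - z + 1) > 0 \<and> cheb_arg z 0 \<in> unit_strip"
    using eventually_near_half unfolding eventually_nhds_metric by blast
  then show ?thesis
    using HH_continuation_near_critical_values by blast
qed

end
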